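(* Let $0<q\leq 1$, let $D\in\mathbb{R}^{n\times d}$ be a frame with frame bounds $0<\mathcal{L}\leq\mathcal{U}<\infty$, $\kappa=\mathcal{U}/\mathcal{L}$, let $A\in\mathbb{R}^{m\times n}$, and let $s<a$ be positive integers. Assume $A$ satisfies the $(D^{\dagger},q)$-RIP of order $s+a$ (with constants $\delta_a$ and $\delta_{s+a}<1$), and let $\Delta=\frac{1+\delta_a}{1-\delta_{s+a}}$. Let $h\in\mathbb{R}^n$ be arbitrary with associated index sets $T=T_0,T_1,\dots$ and $T_{01}=T_0\cup T_1$ as in the context. Then $$\|D_{T_{01}}^*h\|_2^{q}\leq 2^{-q/2}\left(1+\sqrt{1+4\kappa^{-2}\Delta^{-2/q}}\right)^{q/2}\kappa^q\Delta\, a^{q/2-1}\left(\|D_{T^c}^*h\|_q^q+\frac{\mathcal{L}^{q/2}a^{1-q/2}\|Ah\|_q^q}{1+\delta_a}\right).$$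
   Context: $D$ is a frame with frame bounds $\mathcal{L},\mathcal{U}$ if $\mathcal{L}\|f\|_2^2\leq\|D^*f\|_2^2\leq\mathcal{U}\|f\|_2^2$ for all $f\in\mathbb{R}^n$; $D^{\dagger}=(DD^* )^{-1}D$. $A$ obeys the $(D^\dagger,q)$-RIP of order $k$ with constant $\delta\in[0,1)$ if $(1-\delta)\|D^\dagger v\|_2^q\leq\|AD^\dagger v\|_q^q\leq(1+\delta)\|D^\dagger v\|_2^q$ for all $v\in\mathbb{R}^d$ with at most $k$ nonzero entries; $\delta_k$ is the smallest such $\delta$. Index sets: write $D^*h=(x_1,\dots,x_d)^T$, reorder so that $|x_1|\geq\cdots\geq|x_d|$; $T=T_0=\{1,\dots,s\}$, $T_1=\{s+1,\dots,s+a\}$, $T_i=\{s+(i-1)a+1,\dots,s+ia\}$ for $i\geq2$ (last possibly smaller), $T_{01}=T_0\cup T_1$, $T^c=[d]\setminus T$. For $S\subset[d]$, $D_S^*h$ denotes $D^*h$ restricted to $S$ (entries outside $S$ set to zero). *)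

theory Defs
  imports "HOL-Analysis.Analysis"
begin

definition qnorm_q :: "real \<Rightarrow> real ^ 'i \<Rightarrow> real" where
  "qnorm_q q x = (\<Sum>i\<in>UNIV. \<bar>x $ i\<bar> powr q)"

definition is_frame :: "real ^ 'd ^ 'n \<Rightarrow> real \<Rightarrow> real \<Rightarrow> bool" where
  "is_frame D L U \<longleftrightarrow>
     (\<forall>f. L * (norm f)^2 \<le> (norm (transpose D *v f))^2 \<and>
          (norm (transpose D *v f))^2 \<le> U * (norm f)^2)"

definition dagger :: "real ^ 'd ^ 'n \<Rightarrow> real ^ 'd ^ 'n" where
  "dagger D = matrix_inv (D ** transpose D) ** D"

definition dq_rip :: "real ^ 'n ^ 'm \<Rightarrow> real ^ 'd ^ 'n \<Rightarrow> real \<Rightarrow> nat \<Rightarrow> real \<Rightarrow> bool" where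
  "dq_rip A D q k \<delta> \<longleftrightarrow> 0 \<le> \<delta> \<and> \<delta> < 1 \<and>
     (\<forall>v :: real ^ 'd. card {i. v $ i \<noteq> 0} \<le> k \<longrightarrow>
        (1 - \<delta>) * norm (dagger D *v v) powr q \<le> qnorm_q q (A *v (dagger D *v v)) \<and>
        qnorm_q q (A *v (dagger D *v v)) \<le> (1 + \<delta>) * norm (dagger D *v v) powr q)"

definition rip_const :: "real ^ 'n ^ 'm \<Rightarrow> real ^ 'd ^ 'n \<Rightarrow> real \<Rightarrow> nat \<Rightarrow> real" where
  "rip_const A D q k = Inf {\<delta>. dq_rip A D q k \<delta>}"

text \<open>D_S^* h: the vector D^* h with entries outside S set to zero.\<close>
definition restr_analysis :: "real ^ 'd ^ 'n \<Rightarrow> 'd set \<Rightarrow> real ^ 'n \<Rightarrow> real ^ 'd" where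
  "restr_analysis D S h = (\<chi> i. if i \<in> S then (transpose D *v h) $ i else 0)"

end

theory Submission
  imports Defs
begin

text \<open>
  Write \<open>x = D\<^sup>* h\<close> and split it as \<open>x = x\<^sub>T\<^sub>0\<^sub>1 + \<Sum>\<^sub>j\<^sub>\<ge>\<^sub>2 x\<^sub>T\<^sub>j\<close>. Since \<open>D\<^sup>\<dagger>\<close> is a left inverse of \<open>D\<^sup>*\<close>,
  \<open>h = D\<^sup>\<dagger> x\<^sub>T\<^sub>0\<^sub>1 + \<Sum>\<^sub>j D\<^sup>\<dagger> x\<^sub>T\<^sub>j\<close>, and the RIP (lower bound of order \<open>s + a\<close> on the first term, upper
  bound of order \<open>a\<close> on the others) together with the \<open>q\<close>-triangle inequality controls
  \<open>\<parallel>D\<^sup>\<dagger> x\<^sub>T\<^sub>0\<^sub>1\<parallel>\<^sup>q\<close> by \<open>\<parallel>Ah\<parallel>\<^sub>q\<^sup>q\<close> and \<open>\<Sum>\<^sub>j \<parallel>x\<^sub>T\<^sub>j\<parallel>\<^sup>q\<close>; by the sorting, every entry of \<open>T\<^sub>j\<^sub>+\<^sub>1\<close> is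
  dominated by the \<open>q\<close>-mean of \<open>T\<^sub>j\<close>, so this sum is at most \<open>a\<^sup>q\<^sup>/\<^sup>2\<^sup>-\<^sup>1 \<parallel>x\<^sub>T\<^sub>c\<parallel>\<^sub>q\<^sup>q\<close>.
  On the other hand \<open>\<parallel>x\<^sub>T\<^sub>0\<^sub>1\<parallel>\<^sup>2 = \<langle>D\<^sup>* D\<^sup>\<dagger> x\<^sub>T\<^sub>0\<^sub>1, x\<rangle> \<le> \<surd>\<U> \<parallel>D\<^sup>\<dagger> x\<^sub>T\<^sub>0\<^sub>1\<parallel> \<parallel>x\<parallel>\<close> and
  \<open>\<parallel>x\<parallel>\<^sup>2 = \<parallel>x\<^sub>T\<^sub>0\<^sub>1\<parallel>\<^sup>2 + \<parallel>x\<^sub>T\<^sub>0\<^sub>1\<^sub>c\<parallel>\<^sup>2\<close>, a quadratic inequality in \<open>\<parallel>x\<^sub>T\<^sub>0\<^sub>1\<parallel>\<^sup>2\<close>; bounding it by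
  its positive root gives the constant \<open>(1 + \<surd>(1 + 4\<kappa>\<^sup>-\<^sup>2\<Delta>\<^sup>-\<^sup>2\<^sup>/\<^sup>q))/2\<close>.
\<close>

section \<open>Subadditivity of \<open>q\<close>-th powers\<close>

lemma powr_add_le:
  fixes x y q :: real
  assumes "0 \<le> x" "0 \<le> y" "0 < q" "q \<le> 1"
  shows "(x + y) powr q \<le> x powr q + y powr q"
proof (cases "x + y = 0")
  case True
  then show ?thesis by simp
next
  case False
  then have xy: "x + y > 0" using assms by simp
  have weighted: "c * (x + y) powr (q - 1) \<le> c powr q" if "0 \<le> c" "c \<le> x + y" for c
  proof (cases "c = 0")
    case False
    then have "c > 0" using that by simp
    then have "c * (x + y) powr (q - 1) \<le> c * c powr (q - 1)"
      using that assms by (intro mult_left_mono powr_mono2') auto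
    also have "\<dots> = c powr q" using powr_mult_base[of c "q - 1"] \<open>c > 0\<close> by simp
    finally show ?thesis .
  qed simp
  have "(x + y) powr q = x * (x + y) powr (q - 1) + y * (x + y) powr (q - 1)"
    using powr_mult_base[of "x + y" "q - 1"] xy by (simp add: algebra_simps)
  also have "\<dots> \<le> x powr q + y powr q"
    using weighted[of x] weighted[of y] assms by simp
  finally show ?thesis .
qed

lemma powr_sum_le:
  fixes f :: "'k \<Rightarrow> real"
  assumes "finite K" "\<And>k. k \<in> K \<Longrightarrow> 0 \<le> f k" "0 < q" "q \<le> 1"
  shows "(\<Sum>k\<in>K. f k) powr q \<le> (\<Sum>k\<in>K. f k powr q)"
  using assms
proof (induction K rule: finite_induct)
  case (insert k K)
  then have "(\<Sum>k\<in>insert k K. f k) powr q \<le> f k powr q + (\<Sum>k\<in>K. f k) powr q"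
    by (simp add: powr_add_le sum_nonneg)
  with insert show ?case by simp
qed simp

lemma norm_sum_powr_le:
  fixes v :: "'k \<Rightarrow> 'a::real_normed_vector"
  assumes "finite K" "0 < q" "q \<le> 1"
  shows "norm (\<Sum>k\<in>K. v k) powr q \<le> (\<Sum>k\<in>K. norm (v k) powr q)"
proof -
  have "norm (\<Sum>k\<in>K. v k) powr q \<le> (\<Sum>k\<in>K. norm (v k)) powr q"
    using assms by (intro powr_mono2 norm_sum) auto
  also have "\<dots> \<le> (\<Sum>k\<in>K. norm (v k) powr q)"
    using assms by (intro powr_sum_le) auto
  finally show ?thesis .
qed

lemma sq_le_powr_of_powr_le:
  fixes z c q :: real
  assumes "0 < q" "0 \<le> z" "z powr q \<le> c"
  shows "z\<^sup>2 \<le> c powr (2 / q)"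
proof -
  have "z\<^sup>2 = (z powr q) powr (2 / q)"
    using assms by (simp add: powr_powr flip: powr_numeral)
  also have "\<dots> \<le> c powr (2 / q)" using assms by (intro powr_mono2) auto
  finally show ?thesis .
qed

lemma norm_powr_eq_sq_powr: "norm (v::'a::real_normed_vector) powr q = (norm v)\<^sup>2 powr (q / 2)"
  by (simp add: powr_powr flip: powr_numeral)

lemma qnorm_q_nonneg: "0 \<le> qnorm_q q x"
  unfolding qnorm_q_def by (simp add: sum_nonneg)

lemma qnorm_q_add_le:
  assumes "0 < q" "q \<le> 1"
  shows "qnorm_q q (x + y) \<le> qnorm_q q x + qnorm_q q y"
proof -
  have "\<bar>x $ i + y $ i\<bar> powr q \<le> \<bar>x $ i\<bar> powr q + \<bar>y $ i\<bar> powr q" for i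
  proof -
    have "\<bar>x $ i + y $ i\<bar> powr q \<le> (\<bar>x $ i\<bar> + \<bar>y $ i\<bar>) powr q"
      using assms by (intro powr_mono2) auto
    also have "\<dots> \<le> \<bar>x $ i\<bar> powr q + \<bar>y $ i\<bar> powr q"
      using assms by (intro powr_add_le) auto
    finally show ?thesis .
  qed
  then show ?thesis
    unfolding qnorm_q_def by (simp add: sum.distrib[symmetric] sum_mono)
qed

lemma qnorm_q_diff_le:
  assumes "0 < q" "q \<le> 1"
  shows "qnorm_q q (x - y) \<le> qnorm_q q x + qnorm_q q y"
  using qnorm_q_add_le[OF assms, of x "- y"] by (simp add: qnorm_q_def)

lemma qnorm_q_sum_le:
  assumes "finite K" "0 < q" "q \<le> 1"
  shows "qnorm_q q (\<Sum>k\<in>K. z k) \<le> (\<Sum>k\<in>K. qnorm_q q (z k))"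
  using assms
proof (induction K rule: finite_induct)
  case (insert k K)
  then show ?case
    using qnorm_q_add_le[OF insert(4,5), of "z k" "\<Sum>k\<in>K. z k"] by simp
qed (simp add: qnorm_q_def)

section \<open>Frames and the canonical dual frame\<close>

lemma inner_matrix_vector: "inner f (D *v y) = inner (transpose D *v f) (y::real^_)"
  by (simp add: dot_lmul_matrix[symmetric])

lemma frame_gram_invertible:
  fixes D :: "real ^ 'd ^ 'n"
  assumes "is_frame D L U" "0 < L"
  shows "invertible (D ** transpose D)"
proof -
  have "f = 0" if "(D ** transpose D) *v f = 0" for f
  proof -
    have "(norm (transpose D *v f))\<^sup>2 = inner f ((D ** transpose D) *v f)"
      by (simp only: matrix_vector_mul_assoc[symmetric] inner_matrix_vector power2_norm_eq_inner)
    with that have "(norm (transpose D *v f))\<^sup>2 = 0" by simp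
    moreover have "L * (norm f)\<^sup>2 \<le> (norm (transpose D *v f))\<^sup>2"
      using assms(1) unfolding is_frame_def by blast
    ultimately show "f = 0" using assms(2) by (simp add: mult_le_0_iff)
  qed
  then show ?thesis using invertible_left_inverse matrix_left_invertible_ker by blast
qed

lemma frame_gram_inverse:
  fixes D :: "real ^ 'd ^ 'n"
  assumes "is_frame D L U" "0 < L"
  shows "(D ** transpose D) ** matrix_inv (D ** transpose D) = mat 1 \<and>
    matrix_inv (D ** transpose D) ** (D ** transpose D) = mat 1"
  using frame_gram_invertible[OF assms] unfolding invertible_def matrix_inv_def by (rule someI_ex)

lemma dagger_transpose_cancel:
  fixes D :: "real ^ 'd ^ 'n"
  assumes "is_frame D L U" "0 < L"
  shows "dagger D *v (transpose D *v h) = h"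
  using frame_gram_inverse[OF assms]
  by (simp add: dagger_def matrix_vector_mul_assoc matrix_mul_assoc del: transpose_matrix_vector)

lemma gram_dagger:
  fixes D :: "real ^ 'd ^ 'n"
  assumes "is_frame D L U" "0 < L"
  shows "(D ** transpose D) *v (dagger D *v v) = D *v v"
proof -
  let ?G = "D ** transpose D"
  have "?G *v (dagger D *v v) = ((?G ** matrix_inv ?G) ** D) *v v"
    unfolding dagger_def by (simp only: matrix_vector_mul_assoc matrix_mul_assoc)
  then show ?thesis using frame_gram_inverse[OF assms] by simp
qed

lemma norm_dagger_sq_le:
  fixes D :: "real ^ 'd ^ 'n"
  assumes "is_frame D L U" "0 < L"
  shows "L * (norm (dagger D *v v))\<^sup>2 \<le> (norm v)\<^sup>2"
proof -
  define y where "y = dagger D *v v"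
  have "(norm (transpose D *v y))\<^sup>2 = inner y ((D ** transpose D) *v y)"
    by (simp only: matrix_vector_mul_assoc[symmetric] inner_matrix_vector power2_norm_eq_inner)
  also have "\<dots> = inner (transpose D *v y) v"
    unfolding y_def gram_dagger[OF assms] by (rule inner_matrix_vector)
  also have "\<dots> \<le> norm (transpose D *v y) * norm v"
    by (rule norm_cauchy_schwarz)
  finally have "norm (transpose D *v y) \<le> norm v"
    by (cases "transpose D *v y = 0") (auto simp: power2_eq_square)
  then have "(norm (transpose D *v y))\<^sup>2 \<le> (norm v)\<^sup>2" by (simp add: power_mono)
  moreover have "L * (norm y)\<^sup>2 \<le> (norm (transpose D *v y))\<^sup>2"
    using assms(1) unfolding is_frame_def by blast
  ultimately show ?thesis unfolding y_def by linarith
qed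

lemma norm_dagger_powr_le:
  fixes D :: "real ^ 'd ^ 'n"
  assumes "is_frame D L U" "0 < L" "0 < q"
  shows "norm (dagger D *v v) powr q \<le> L powr (- q / 2) * norm v powr q"
proof -
  have "(norm (dagger D *v v))\<^sup>2 \<le> (norm v)\<^sup>2 / L"
    using norm_dagger_sq_le[OF assms(1,2), of v] assms(2) by (simp add: field_simps)
  then have "norm (dagger D *v v) powr q \<le> ((norm v)\<^sup>2 / L) powr (q / 2)"
    unfolding norm_powr_eq_sq_powr[of "dagger D *v v"] using assms by (intro powr_mono2) auto
  also have "\<dots> = L powr (- q / 2) * norm v powr q"
    using assms(2) by (simp add: powr_divide norm_powr_eq_sq_powr powr_minus_divide)
  finally show ?thesis .
qed

section \<open>Restricted isometry constants\<close>

lemma dq_rip_mono: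
  assumes "dq_rip A D q k \<delta>" "k' \<le> k"
  shows "dq_rip A D q k' \<delta>"
  using assms unfolding dq_rip_def by auto

lemma rip_const_attained:
  assumes "\<exists>\<delta>. dq_rip A D q k \<delta>"
  shows "dq_rip A D q k (rip_const A D q k)"
proof -
  define R where "R = {\<delta>. dq_rip A D q k \<delta>}"
  define c where "c = rip_const A D q k"
  obtain \<delta>0 where \<delta>0: "\<delta>0 \<in> R" using assms R_def by auto
  have c_greatest: "t \<le> c" if "\<And>\<delta>. \<delta> \<in> R \<Longrightarrow> t \<le> \<delta>" for t
    unfolding c_def rip_const_def R_def[symmetric] using \<delta>0 that by (intro cInf_greatest) auto
  have "bdd_below R" unfolding R_def dq_rip_def bdd_below_def by auto
  then have "c \<le> \<delta>0" unfolding c_def rip_const_def R_def[symmetric] using \<delta>0 by (rule cInf_lower[rotated])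
  moreover have "\<delta>0 < 1" "0 \<le> c" using \<delta>0 by (auto simp: R_def dq_rip_def intro!: c_greatest)
  moreover have "(1 - c) * N \<le> Q \<and> Q \<le> (1 + c) * N"
    if "0 \<le> N" and bounds: "\<And>\<delta>. \<delta> \<in> R \<Longrightarrow> (1 - \<delta>) * N \<le> Q \<and> Q \<le> (1 + \<delta>) * N" for N Q
  proof (cases "N = 0")
    case True
    then show ?thesis using bounds[OF \<delta>0] by simp
  next
    case False
    with \<open>0 \<le> N\<close> have "N > 0" by simp
    have "(N - Q) / N \<le> c" "(Q - N) / N \<le> c"
      using bounds \<open>N > 0\<close> by (intro c_greatest; simp add: divide_le_eq algebra_simps)+
    then have "N - Q \<le> c * N" "Q - N \<le> c * N"
      using \<open>N > 0\<close> by (simp_all add: divide_le_eq)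
    then show ?thesis by (simp add: algebra_simps)
  qed
  ultimately show ?thesis
    unfolding c_def[symmetric] using R_def by (auto simp: dq_rip_def)
qed

section \<open>Restricted analysis coefficients\<close>

lemma restr_analysis_nth [simp]:
  "restr_analysis D S h $ i = (if i \<in> S then (transpose D *v h) $ i else 0)"
  unfolding restr_analysis_def by simp

lemma restr_analysis_UNIV: "restr_analysis D UNIV h = transpose D *v h"
  by (simp add: vec_eq_iff)

lemma restr_analysis_Un:
  assumes "S \<inter> S' = {}"
  shows "restr_analysis D (S \<union> S') h = restr_analysis D S h + restr_analysis D S' h"
  using assms by (auto simp: vec_eq_iff)

lemma restr_analysis_UN:
  assumes "finite J" "disjoint_family_on S J"
  shows "restr_analysis D (\<Union>j\<in>J. S j) h = (\<Sum>j\<in>J. restr_analysis D (S j) h)"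
  using assms
proof (induction J rule: finite_induct)
  case (insert j J)
  then have "S j \<inter> (\<Union>k\<in>J. S k) = {}" "disjoint_family_on S J"
    by (auto simp: disjoint_family_on_def)
  with insert show ?case by (simp add: restr_analysis_Un)
qed (simp add: vec_eq_iff)

lemma card_support_restr_analysis: "card {i. restr_analysis D S h $ i \<noteq> 0} \<le> card S"
  by (rule card_mono) auto

lemma qnorm_q_restr_analysis:
  "qnorm_q q (restr_analysis D S h) = (\<Sum>i\<in>S. \<bar>(transpose D *v h) $ i\<bar> powr q)"
proof -
  have "qnorm_q q (restr_analysis D S h)
      = (\<Sum>i\<in>UNIV. if i \<in> S then \<bar>(transpose D *v h) $ i\<bar> powr q else 0)"
    unfolding qnorm_q_def by (intro sum.cong) auto
  then show ?thesis by (simp add: sum.If_cases)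
qed

lemma norm_restr_analysis_sq:
  "(norm (restr_analysis D S h))\<^sup>2 = (\<Sum>i\<in>S. ((transpose D *v h) $ i)\<^sup>2)"
  unfolding power2_norm_eq_inner inner_vec_def
  by (simp add: if_distrib sum.If_cases power2_eq_square cong: if_cong)

lemma norm_analysis_sq_split:
  "(norm (transpose D *v h))\<^sup>2 = (norm (restr_analysis D S h))\<^sup>2 + (norm (restr_analysis D (UNIV - S) h))\<^sup>2"
  using restr_analysis_UNIV[of D h] norm_restr_analysis_sq[of D UNIV h]
  by (simp add: norm_restr_analysis_sq sum.subset_diff[of S UNIV])

lemma restr_analysis_partition:
  assumes "finite J" "disjoint_family_on S J"
    and "S0 \<inter> (\<Union>j\<in>J. S j) = {}" "S0 \<union> (\<Union>j\<in>J. S j) = UNIV"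
  shows "restr_analysis D (UNIV - S0) h = (\<Sum>j\<in>J. restr_analysis D (S j) h)"
    and "transpose D *v h = restr_analysis D S0 h + (\<Sum>j\<in>J. restr_analysis D (S j) h)"
proof -
  have "UNIV - S0 = (\<Union>j\<in>J. S j)" using assms(3,4) by blast
  then show tail: "restr_analysis D (UNIV - S0) h = (\<Sum>j\<in>J. restr_analysis D (S j) h)"
    by (simp add: restr_analysis_UN[OF assms(1,2)])
  have "restr_analysis D UNIV h = restr_analysis D S0 h + restr_analysis D (UNIV - S0) h"
    using restr_analysis_Un[of S0 "UNIV - S0"] by simp
  then show "transpose D *v h = restr_analysis D S0 h + (\<Sum>j\<in>J. restr_analysis D (S j) h)"
    unfolding tail restr_analysis_UNIV .
qed

lemma norm_restr_analysis_sq_le: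
  fixes D :: "real ^ 'd ^ 'n"
  assumes "is_frame D L U" "0 < L"
  shows "(norm (restr_analysis D S h))\<^sup>2
    \<le> sqrt U * norm (dagger D *v restr_analysis D S h) * norm (transpose D *v h)"
proof -
  define v where "v = restr_analysis D S h"
  define w where "w = dagger D *v v"
  have "(norm v)\<^sup>2 = inner v (transpose D *v h)"
    unfolding v_def power2_norm_eq_inner inner_vec_def by (intro sum.cong) auto
  also have "\<dots> = inner ((D ** transpose D) *v w) h"
    unfolding w_def gram_dagger[OF assms] by (simp add: inner_matrix_vector inner_commute)
  also have "\<dots> = inner (transpose D *v w) (transpose D *v h)"
    by (simp add: inner_matrix_vector matrix_vector_mul_assoc[symmetric] del: transpose_matrix_vector)
  also have "\<dots> \<le> norm (transpose D *v w) * norm (transpose D *v h)"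
    by (rule norm_cauchy_schwarz)
  also have "\<dots> \<le> sqrt U * norm w * norm (transpose D *v h)"
  proof -
    have "(norm (transpose D *v w))\<^sup>2 \<le> U * (norm w)\<^sup>2"
      using assms(1) unfolding is_frame_def by blast
    then have "norm (transpose D *v w) \<le> sqrt U * norm w"
      using real_sqrt_le_mono by (fastforce simp: real_sqrt_mult)
    then show ?thesis by (simp add: mult_right_mono)
  qed
  finally show ?thesis unfolding v_def w_def .
qed

section \<open>The estimate for an arbitrary partition of the coefficients\<close>

lemma rip_decomposition_bound:
  fixes D :: "real ^ 'd ^ 'n" and A :: "real ^ 'n ^ 'm" and v :: "'j \<Rightarrow> real ^ 'd"
  assumes frame: "is_frame D L U" "0 < L" and q: "0 < q" "q \<le> 1"
    and rip0: "dq_rip A D q k \<delta>k" and rip: "dq_rip A D q a \<delta>a" and "finite J"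
    and h: "h = dagger D *v (v0 + (\<Sum>j\<in>J. v j))"
    and sparse: "card {i. v0 $ i \<noteq> 0} \<le> k" "\<forall>j\<in>J. card {i. v j $ i \<noteq> 0} \<le> a"
  shows "(1 - \<delta>k) * norm (dagger D *v v0) powr q
    \<le> qnorm_q q (A *v h) + (1 + \<delta>a) * L powr (- q / 2) * (\<Sum>j\<in>J. norm (v j) powr q)"
proof -
  have lin: "M *v (\<Sum>j\<in>J. z j) = (\<Sum>j\<in>J. M *v z j)" for M :: "real ^ 'c ^ 'r" and z
    by (rule linear_sum[OF matrix_vector_mul_linear])
  have "A *v (dagger D *v v0) = A *v h - (\<Sum>j\<in>J. A *v (dagger D *v v j))"
    unfolding h by (simp add: matrix_vector_right_distrib lin)
  then have "qnorm_q q (A *v (dagger D *v v0))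
      \<le> qnorm_q q (A *v h) + qnorm_q q (\<Sum>j\<in>J. A *v (dagger D *v v j))"
    using qnorm_q_diff_le[OF q] by simp
  with rip0 sparse(1) have "(1 - \<delta>k) * norm (dagger D *v v0) powr q
      \<le> qnorm_q q (A *v h) + qnorm_q q (\<Sum>j\<in>J. A *v (dagger D *v v j))"
    unfolding dq_rip_def by (meson order_trans)
  also have "\<dots> \<le> qnorm_q q (A *v h) + (\<Sum>j\<in>J. qnorm_q q (A *v (dagger D *v v j)))"
    using qnorm_q_sum_le[OF \<open>finite J\<close> q] by (rule add_left_mono)
  also have "\<dots> \<le> qnorm_q q (A *v h) + (\<Sum>j\<in>J. (1 + \<delta>a) * (L powr (- q / 2) * norm (v j) powr q))"
  proof (intro add_left_mono sum_mono)
    fix j assume "j \<in> J"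
    then have "qnorm_q q (A *v (dagger D *v v j)) \<le> (1 + \<delta>a) * norm (dagger D *v v j) powr q"
      using rip sparse(2) unfolding dq_rip_def by blast
    also have "\<dots> \<le> (1 + \<delta>a) * (L powr (- q / 2) * norm (v j) powr q)"
      using rip norm_dagger_powr_le[OF frame q(1)] by (intro mult_left_mono) (auto simp: dq_rip_def)
    finally show "qnorm_q q (A *v (dagger D *v v j)) \<le> \<dots>" .
  qed
  finally show ?thesis by (simp add: sum_distrib_left mult.assoc)
qed

lemma quadratic_le_root:
  fixes t c \<rho> :: real
  assumes "0 \<le> c" "0 \<le> \<rho>" "t\<^sup>2 \<le> c * t + c\<^sup>2 * \<rho>"
  shows "t \<le> c * (1 + sqrt (1 + 4 * \<rho>)) / 2"
proof (rule ccontr)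
  define E where "E = c * (1 + sqrt (1 + 4 * \<rho>)) / 2"
  assume "\<not> t \<le> c * (1 + sqrt (1 + 4 * \<rho>)) / 2"
  then have "E < t" unfolding E_def by simp
  have "1 \<le> sqrt (1 + 4 * \<rho>)" using assms by simp
  then have "c \<le> E" unfolding E_def using assms by (simp add: mult_left_mono[of 1 _ c, simplified] field_simps)
  have "(sqrt (1 + 4 * \<rho>))\<^sup>2 = 1 + 4 * \<rho>" using assms by simp
  then have "t\<^sup>2 - c * t - c\<^sup>2 * \<rho> = (t - E) * (t + E - c)"
    unfolding E_def by (simp add: power2_eq_square algebra_simps)
  also have "\<dots> > 0" using \<open>E < t\<close> \<open>c \<le> E\<close> assms by (intro mult_pos_pos) auto
  finally show False using assms by simp
qed

lemma quadratic_frame_sq_bound: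
  fixes X R W M L U \<Delta> q :: real
  assumes q: "0 < q" and LU: "0 < L" "L \<le> U" and "0 < \<Delta>"
    and nonneg: "0 \<le> X" "0 \<le> W" "0 \<le> R" "0 \<le> M"
    and quad: "X\<^sup>2 \<le> sqrt U * W * sqrt (X\<^sup>2 + R\<^sup>2)"
    and W: "W powr q \<le> \<Delta> * L powr (- q / 2) * M"
    and R: "R powr q \<le> M"
  shows "X\<^sup>2 \<le> (U / L)\<^sup>2 * (\<Delta> * M) powr (2 / q)
    * (1 + sqrt (1 + 4 * (U / L) powr (-2) * \<Delta> powr (-2 / q))) / 2"
proof -
  define \<kappa> where "\<kappa> = U / L"
  define c where "c = \<kappa>\<^sup>2 * (\<Delta> * M) powr (2 / q)"
  define \<rho> where "\<rho> = \<kappa> powr (-2) * \<Delta> powr (-2 / q)"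
  have "1 \<le> \<kappa>" "0 < \<kappa>" using LU unfolding \<kappa>_def by simp_all
  have "0 \<le> c" "0 \<le> \<rho>" unfolding c_def \<rho>_def by simp_all
  have "W\<^sup>2 \<le> (\<Delta> * M * L powr (- q / 2)) powr (2 / q)"
    using sq_le_powr_of_powr_le[OF q nonneg(2) W] by (simp add: ac_simps)
  also have "\<dots> = (\<Delta> * M) powr (2 / q) * L powr (- q / 2 * (2 / q))"
    using \<open>0 < \<Delta>\<close> nonneg by (simp add: powr_mult powr_powr)
  also have "\<dots> = (\<Delta> * M) powr (2 / q) / L"
    using LU q by (simp add: powr_neg_one)
  finally have "U * W\<^sup>2 \<le> \<kappa> * (\<Delta> * M) powr (2 / q)"
    using LU unfolding \<kappa>_def by (simp add: field_simps)
  \<comment> \<open>wasteful, but this is what produces the factor \<open>\<kappa>\<^sup>q\<close> of the stated constant\<close>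
  also have "\<dots> \<le> c"
    unfolding c_def using \<open>1 \<le> \<kappa>\<close> by (intro mult_right_mono) (auto simp: power2_eq_square)
  finally have UW: "U * W\<^sup>2 \<le> c" .
  have "c * \<rho> = (\<kappa>\<^sup>2 * \<kappa> powr (-2)) * (\<Delta> powr (2 / q) * \<Delta> powr (-2 / q)) * M powr (2 / q)"
    unfolding c_def \<rho>_def using \<open>0 < \<Delta>\<close> nonneg by (simp add: powr_mult ac_simps)
  also have "\<dots> = M powr (2 / q)"
    using \<open>0 < \<kappa>\<close> \<open>0 < \<Delta>\<close> by (simp add: powr_minus_divide flip: powr_add powr_numeral)
  finally have R2: "R\<^sup>2 \<le> c * \<rho>" using sq_le_powr_of_powr_le[OF q nonneg(3) R] by simp
  have "(X\<^sup>2)\<^sup>2 \<le> (sqrt U * W * sqrt (X\<^sup>2 + R\<^sup>2))\<^sup>2"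
    using quad by (intro power_mono) auto
  also have "\<dots> = U * W\<^sup>2 * (X\<^sup>2 + R\<^sup>2)"
    using LU by (simp add: power_mult_distrib)
  also have "\<dots> \<le> c * (X\<^sup>2 + c * \<rho>)"
    using UW R2 \<open>0 \<le> c\<close> by (intro mult_mono) auto
  finally have "X\<^sup>2 \<le> c * (1 + sqrt (1 + 4 * \<rho>)) / 2"
    using \<open>0 \<le> c\<close> \<open>0 \<le> \<rho>\<close> by (intro quadratic_le_root) (auto simp: algebra_simps power2_eq_square)
  then show ?thesis unfolding c_def \<rho>_def \<kappa>_def by (simp add: mult.assoc)
qed

lemma quadratic_frame_bound:
  fixes X R W M L U \<Delta> q :: real
  assumes q: "0 < q" and LU: "0 < L" "L \<le> U" and "0 < \<Delta>"
    and nonneg: "0 \<le> X" "0 \<le> W" "0 \<le> R" "0 \<le> M"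
    and quad: "X\<^sup>2 \<le> sqrt U * W * sqrt (X\<^sup>2 + R\<^sup>2)"
    and W: "W powr q \<le> \<Delta> * L powr (- q / 2) * M"
    and R: "R powr q \<le> M"
  shows "X powr q \<le> 2 powr (- q / 2) * (1 + sqrt (1 + 4 * (U / L) powr (-2) * \<Delta> powr (-2 / q))) powr (q / 2)
    * (U / L) powr q * \<Delta> * M"
proof -
  define \<kappa> where "\<kappa> = U / L"
  define S where "S = sqrt (1 + 4 * \<kappa> powr (-2) * \<Delta> powr (-2 / q))"
  have "0 < \<kappa>" using LU unfolding \<kappa>_def by simp
  have "X powr q = (X\<^sup>2) powr (q / 2)"
    using nonneg by (simp add: powr_powr flip: powr_numeral)
  also have "\<dots> \<le> (\<kappa>\<^sup>2 * (\<Delta> * M) powr (2 / q) * ((1 + S) / 2)) powr (q / 2)"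
    using quadratic_frame_sq_bound[OF assms] q unfolding \<kappa>_def S_def by (intro powr_mono2) auto
  also have "\<dots> = \<kappa> powr q * (\<Delta> * M) * (1 + S) powr (q / 2) * 2 powr (- q / 2)"
    using \<open>0 < \<kappa>\<close> \<open>0 < \<Delta>\<close> nonneg q
    by (simp add: powr_mult powr_divide powr_powr powr_minus_divide flip: powr_numeral)
  finally show ?thesis unfolding \<kappa>_def S_def by (simp add: ac_simps)
qed

lemma frame_rip_partition_bound:
  fixes D :: "real ^ 'd ^ 'n" and A :: "real ^ 'n ^ 'm" and S :: "'j \<Rightarrow> 'd set"
  assumes q: "0 < q" "q \<le> 1" and LU: "0 < L" "L \<le> U" and frame: "is_frame D L U"
    and rip0: "dq_rip A D q k \<delta>k" and rip: "dq_rip A D q a \<delta>a"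
    and J: "finite J" "disjoint_family_on S J"
    and partition: "S0 \<inter> (\<Union>j\<in>J. S j) = {}" "S0 \<union> (\<Union>j\<in>J. S j) = UNIV"
    and card: "card S0 \<le> k" "\<forall>j\<in>J. card (S j) \<le> a"
    and tail: "(\<Sum>j\<in>J. norm (restr_analysis D (S j) h) powr q) \<le> B"
  shows "norm (restr_analysis D S0 h) powr q
    \<le> 2 powr (- q / 2) * (1 + sqrt (1 + 4 * (U / L) powr (-2) * ((1 + \<delta>a) / (1 - \<delta>k)) powr (-2 / q))) powr (q / 2)
      * (U / L) powr q * ((1 + \<delta>a) / (1 - \<delta>k)) * (B + L powr (q / 2) * qnorm_q q (A *v h) / (1 + \<delta>a))"
proof -
  define r where "r S' = restr_analysis D S' h" for S'
  define \<Delta> where "\<Delta> = (1 + \<delta>a) / (1 - \<delta>k)"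
  define M where "M = B + L powr (q / 2) * qnorm_q q (A *v h) / (1 + \<delta>a)"
  have "0 \<le> \<delta>a" "\<delta>k < 1" using rip0 rip by (auto simp: dq_rip_def)
  then have "0 < \<Delta>" unfolding \<Delta>_def by simp
  have "0 \<le> B" using order_trans[OF sum_nonneg tail] by simp
  then have "B \<le> M" "0 \<le> M"
    unfolding M_def using \<open>0 \<le> \<delta>a\<close> by (simp_all add: qnorm_q_nonneg)
  note decomposition = restr_analysis_partition[OF J partition, of D h, folded r_def]
  have "h = dagger D *v (r S0 + (\<Sum>j\<in>J. r (S j)))"
    using decomposition(2) dagger_transpose_cancel[OF frame LU(1)] by metis
  then have "(1 - \<delta>k) * norm (dagger D *v r S0) powr q
      \<le> qnorm_q q (A *v h) + (1 + \<delta>a) * L powr (- q / 2) * (\<Sum>j\<in>J. norm (r (S j)) powr q)"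
    using order_trans[OF card_support_restr_analysis] card unfolding r_def
    by (intro rip_decomposition_bound[OF frame(1) LU(1) q rip0 rip J(1)]) blast+
  also have "\<dots> \<le> qnorm_q q (A *v h) + (1 + \<delta>a) * L powr (- q / 2) * B"
    using tail \<open>0 \<le> \<delta>a\<close> unfolding r_def by (intro add_left_mono mult_left_mono) auto
  also have "\<dots> = (1 - \<delta>k) * (\<Delta> * L powr (- q / 2) * M)"
  proof -
    have rearrange: "Q + c * l * B = (1 - d) * (c / (1 - d) * l * (B + l' * Q / c))"
      if "c \<noteq> 0" "d \<noteq> 1" "l * l' = 1" for c d l l' Q :: real
      using that by (simp add: field_simps)
    have "L powr (- q / 2) * L powr (q / 2) = 1" using LU(1) by (simp flip: powr_add)
    then show ?thesis
      unfolding \<Delta>_def M_def by (rule rearrange[rotated 2]) (use \<open>0 \<le> \<delta>a\<close> \<open>\<delta>k < 1\<close> in simp_all)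
  qed
  finally have W: "norm (dagger D *v r S0) powr q \<le> \<Delta> * L powr (- q / 2) * M"
    using \<open>\<delta>k < 1\<close> by (simp only: mult_le_cancel_left_pos diff_gt_0_iff_gt)
  have "norm (r (UNIV - S0)) powr q \<le> (\<Sum>j\<in>J. norm (r (S j)) powr q)"
    unfolding decomposition(1) by (rule norm_sum_powr_le[OF J(1) q])
  with tail \<open>B \<le> M\<close> have R: "norm (r (UNIV - S0)) powr q \<le> M" unfolding r_def by simp
  have "(norm (r S0))\<^sup>2 \<le> sqrt U * norm (dagger D *v r S0)
      * sqrt ((norm (r S0))\<^sup>2 + (norm (r (UNIV - S0)))\<^sup>2)"
    using norm_restr_analysis_sq_le[OF frame LU(1)] unfolding r_def
    by (simp flip: norm_analysis_sq_split)
  from quadratic_frame_bound[OF q(1) LU \<open>0 < \<Delta>\<close> norm_ge_zero norm_ge_zero norm_ge_zero \<open>0 \<le> M\<close> this W R]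
  show ?thesis unfolding \<Delta>_def M_def r_def .
qed

section \<open>Sorted blocks\<close>

text \<open>Positions in the sorted order of the block \<open>T\<^sub>k\<^sub>+\<^sub>1\<close>; in particular block \<open>0\<close> is \<open>T\<^sub>1\<close>.\<close>

definition index_block :: "nat \<Rightarrow> nat \<Rightarrow> nat \<Rightarrow> nat \<Rightarrow> nat set" where
  "index_block s a n k = {s + k * a + 1 .. min (s + Suc k * a) n}"

lemma index_block_subset: "index_block s a n k \<subseteq> {s + 1 .. n}"
  unfolding index_block_def by auto

lemma card_index_block_le: "card (index_block s a n k) \<le> a"
  unfolding index_block_def by simp

lemma disjoint_family_index_block: "disjoint_family (index_block s a n)"
proof -
  have "index_block s a n k \<inter> index_block s a n k' = {}" if "k < k'" for k k'
  proof -
    have "Suc k * a \<le> k' * a" using that by (intro mult_le_mono1) simp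
    then show ?thesis unfolding index_block_def by auto
  qed
  then show ?thesis
    unfolding disjoint_family_on_def by (metis Int_commute linorder_neqE_nat)
qed

lemma index_block_cover:
  assumes "0 < a" "p \<in> {1..n}"
  shows "p \<in> {1..min s n} \<union> index_block s a n 0 \<union> (\<Union>j<n. index_block s a n (Suc j))"
proof (cases "p \<le> s + a")
  case True
  then show ?thesis using assms unfolding index_block_def by auto
next
  case False
  define k where "k = (p - s - 1) div a"
  have "0 < k" unfolding k_def using False assms(1) by (simp add: div_greater_zero_iff)
  then obtain j where j: "k = Suc j" using not0_implies_Suc by blast
  have "k * a \<le> p - s - 1" "p - s - 1 < k * a + a"
    unfolding k_def using assms(1) div_times_less_eq_dividend[of "p - s - 1" a]
      mod_less_divisor[OF assms(1), of "p - s - 1"] div_mult_mod_eq[of "p - s - 1" a] by linarith+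
  moreover have "k \<le> k * a" using assms(1) by simp
  ultimately have "j < n" "p \<in> index_block s a n k"
    using False assms(2) j unfolding index_block_def by auto
  then show ?thesis using j by blast
qed

lemma index_block_before:
  assumes "index_block s a n (Suc j) \<noteq> {}"
  shows "card (index_block s a n j) = a"
    and "\<And>p p'. p \<in> index_block s a n (Suc j) \<Longrightarrow> p' \<in> index_block s a n j \<Longrightarrow> p' \<le> p"
proof -
  have "index_block s a n j = {s + j * a + 1 .. s + Suc j * a}"
    using assms unfolding index_block_def by auto
  then show "card (index_block s a n j) = a"
    and "\<And>p p'. p \<in> index_block s a n (Suc j) \<Longrightarrow> p' \<in> index_block s a n j \<Longrightarrow> p' \<le> p"
    unfolding index_block_def by auto
qed

lemma sorted_blocks_disjoint:
  fixes \<sigma> :: "nat \<Rightarrow> 'd"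
  assumes "inj_on \<sigma> {1..n}"
  shows "disjoint_family (\<lambda>k. \<sigma> ` index_block s a n k)"
    and "\<sigma> ` {1..min s n} \<inter> \<sigma> ` index_block s a n k = {}"
proof -
  have sub: "index_block s a n k \<subseteq> {1..n}" for k
    using index_block_subset by fastforce
  show "disjoint_family (\<lambda>k. \<sigma> ` index_block s a n k)"
    unfolding disjoint_family_on_def
  proof (intro ballI impI)
    fix k k' :: nat assume "k \<noteq> k'"
    then have "index_block s a n k \<inter> index_block s a n k' = {}"
      using disjoint_family_onD[OF disjoint_family_index_block] by simp
    then show "\<sigma> ` index_block s a n k \<inter> \<sigma> ` index_block s a n k' = {}"
      using inj_on_image_Int[OF assms sub sub] by (metis image_empty)
  qed
  have "{1..min s n} \<inter> index_block s a n k = {}" "{1..min s n} \<subseteq> {1..n}"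
    unfolding index_block_def by auto
  then show "\<sigma> ` {1..min s n} \<inter> \<sigma> ` index_block s a n k = {}"
    using inj_on_image_Int[OF assms _ sub] by (metis image_empty)
qed

lemma sorted_blocks_partition:
  fixes \<sigma> :: "nat \<Rightarrow> 'd" and s a n :: nat
  assumes "0 < a" "bij_betw \<sigma> {1..n} UNIV"
  defines "T01 \<equiv> \<sigma> ` {1..min s n} \<union> \<sigma> ` index_block s a n 0"
  shows "disjoint_family_on (\<lambda>j. \<sigma> ` index_block s a n (Suc j)) {..<n}"
    and "T01 \<inter> (\<Union>j<n. \<sigma> ` index_block s a n (Suc j)) = {}"
    and "T01 \<union> (\<Union>j<n. \<sigma> ` index_block s a n (Suc j)) = UNIV"
    and "card T01 \<le> s + a"
    and "\<forall>j\<in>{..<n}. card (\<sigma> ` index_block s a n (Suc j)) \<le> a"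
proof -
  have card_block: "card (\<sigma> ` index_block s a n k) \<le> a" for k
    using card_image_le[of "index_block s a n k" \<sigma>] card_index_block_le[of s a n k]
    by (simp add: index_block_def)
  then show "\<forall>j\<in>{..<n}. card (\<sigma> ` index_block s a n (Suc j)) \<le> a" by blast
  have "card T01 \<le> card (\<sigma> ` {1..min s n}) + card (\<sigma> ` index_block s a n 0)"
    unfolding T01_def by (rule card_Un_le)
  moreover have "card (\<sigma> ` {1..min s n}) \<le> s"
    using card_image_le[of "{1..min s n}" \<sigma>] by simp
  ultimately show "card T01 \<le> s + a" using card_block[of 0] by linarith
  have inj: "inj_on \<sigma> {1..n}" using assms(2) by (rule bij_betw_imp_inj_on)
  note disj = sorted_blocks_disjoint[OF inj, of s a]
  show "disjoint_family_on (\<lambda>j. \<sigma> ` index_block s a n (Suc j)) {..<n}"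
    using disj(1) unfolding disjoint_family_on_def by simp
  have "\<sigma> ` index_block s a n 0 \<inter> \<sigma> ` index_block s a n (Suc j) = {}" for j
    using disjoint_family_onD[OF disj(1)] by simp
  then have "i \<notin> T01" if "i \<in> \<sigma> ` index_block s a n (Suc j)" for i j
    using disj(2)[of "Suc j"] that unfolding T01_def by blast
  then show "T01 \<inter> (\<Union>j<n. \<sigma> ` index_block s a n (Suc j)) = {}" by blast
  have "\<sigma> ` {1..n} \<subseteq> T01 \<union> (\<Union>j<n. \<sigma> ` index_block s a n (Suc j))"
  proof
    fix i assume "i \<in> \<sigma> ` {1..n}"
    then obtain p where "p \<in> {1..n}" "i = \<sigma> p" by auto
    with index_block_cover[where s = s, OF assms(1) this(1)]
    show "i \<in> T01 \<union> (\<Union>j<n. \<sigma> ` index_block s a n (Suc j))" unfolding T01_def by auto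
  qed
  then show "T01 \<union> (\<Union>j<n. \<sigma> ` index_block s a n (Suc j)) = UNIV"
    using assms(2) unfolding bij_betw_def by auto
qed

lemma sum_squares_powr_le:
  fixes f :: "'k \<Rightarrow> real"
  assumes "0 < q" "card P \<le> a" "0 \<le> c" "\<And>p. p \<in> P \<Longrightarrow> \<bar>f p\<bar> powr q \<le> c"
  shows "(\<Sum>p\<in>P. (f p)\<^sup>2) powr (q / 2) \<le> real a powr (q / 2) * c"
proof -
  have "(\<Sum>p\<in>P. (f p)\<^sup>2) \<le> (\<Sum>p\<in>P. c powr (2 / q))"
    using sq_le_powr_of_powr_le[OF assms(1) abs_ge_zero assms(4)] by (intro sum_mono) simp
  also have "\<dots> \<le> real a * c powr (2 / q)"
    using assms(2) by (simp add: mult_right_mono)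
  finally have "(\<Sum>p\<in>P. (f p)\<^sup>2) powr (q / 2) \<le> (real a * c powr (2 / q)) powr (q / 2)"
    using assms(1) by (intro powr_mono2) (auto intro: sum_nonneg)
  also have "\<dots> = real a powr (q / 2) * c"
    using assms(1,3) by (simp add: powr_mult powr_powr)
  finally show ?thesis .
qed

text \<open>Each entry of \<open>T\<^sub>j\<^sub>+\<^sub>1\<close> is dominated by the \<open>q\<close>-mean over the (full) block \<open>T\<^sub>j\<close> before it.\<close>

lemma sorted_block_norm_powr_le:
  fixes D :: "real ^ 'd ^ 'n" and \<sigma> :: "nat \<Rightarrow> 'd"
  assumes q: "0 < q" and "0 < a"
    and inj: "inj_on \<sigma> {1..n}"
    and sorted: "\<forall>i j. 1 \<le> i \<and> i \<le> j \<and> j \<le> n \<longrightarrow>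
      \<bar>(transpose D *v h) $ \<sigma> j\<bar> \<le> \<bar>(transpose D *v h) $ \<sigma> i\<bar>"
  shows "norm (restr_analysis D (\<sigma> ` index_block s a n (Suc j)) h) powr q
    \<le> real a powr (q / 2 - 1) * qnorm_q q (restr_analysis D (\<sigma> ` index_block s a n j) h)"
proof (cases "index_block s a n (Suc j) = {}")
  case True
  have "restr_analysis D {} h = 0" by (simp add: vec_eq_iff)
  with True show ?thesis by (auto simp: qnorm_q_nonneg intro!: mult_nonneg_nonneg)
next
  case False
  define x where "x = transpose D *v h"
  define P where "P = index_block s a n (Suc j)"
  define P' where "P' = index_block s a n j"
  define m where "m = (\<Sum>p'\<in>P'. \<bar>x $ \<sigma> p'\<bar> powr q) / a"
  have sub: "index_block s a n k \<subseteq> {1..n}" for k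
    using index_block_subset by fastforce
  have reindex: "(\<Sum>i\<in>\<sigma> ` index_block s a n k. g i) = (\<Sum>p\<in>index_block s a n k. g (\<sigma> p))" for g k
    by (rule sum.reindex[OF inj_on_subset[OF inj sub], unfolded comp_def])
  have "\<bar>x $ \<sigma> p\<bar> powr q \<le> m" if "p \<in> P" for p
  proof -
    have "(\<Sum>p'\<in>P'. \<bar>x $ \<sigma> p\<bar> powr q) \<le> (\<Sum>p'\<in>P'. \<bar>x $ \<sigma> p'\<bar> powr q)"
    proof (rule sum_mono)
      fix p' assume "p' \<in> P'"
      then have "1 \<le> p'" "p' \<le> p" "p \<le> n"
        using index_block_before(2)[OF False] sub that unfolding P_def P'_def by fastforce+
      then show "\<bar>x $ \<sigma> p\<bar> powr q \<le> \<bar>x $ \<sigma> p'\<bar> powr q"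
        using sorted q unfolding x_def by (intro powr_mono2) auto
    qed
    then show ?thesis
      using index_block_before(1)[OF False] \<open>0 < a\<close> unfolding m_def P'_def by (simp add: field_simps)
  qed
  then have "(\<Sum>p\<in>P. (x $ \<sigma> p)\<^sup>2) powr (q / 2) \<le> real a powr (q / 2) * m"
    using card_index_block_le q unfolding P_def m_def
    by (intro sum_squares_powr_le) (auto intro!: sum_nonneg divide_nonneg_nonneg)
  also have "\<dots> = real a powr (q / 2 - 1) * (\<Sum>p'\<in>P'. \<bar>x $ \<sigma> p'\<bar> powr q)"
    using \<open>0 < a\<close> unfolding m_def by (simp add: powr_diff)
  finally show ?thesis
    unfolding norm_powr_eq_sq_powr[of "restr_analysis D _ h"] norm_restr_analysis_sq qnorm_q_restr_analysis
      reindex x_def P_def P'_def .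
qed

lemma sorted_tail_blocks_le:
  fixes D :: "real ^ 'd ^ 'n" and \<sigma> :: "nat \<Rightarrow> 'd"
  assumes q: "0 < q" and "0 < a"
    and inj: "inj_on \<sigma> {1..n}"
    and sorted: "\<forall>i j. 1 \<le> i \<and> i \<le> j \<and> j \<le> n \<longrightarrow>
      \<bar>(transpose D *v h) $ \<sigma> j\<bar> \<le> \<bar>(transpose D *v h) $ \<sigma> i\<bar>"
  shows "(\<Sum>j<n. norm (restr_analysis D (\<sigma> ` index_block s a n (Suc j)) h) powr q)
    \<le> real a powr (q / 2 - 1) * qnorm_q q (restr_analysis D (UNIV - \<sigma> ` {1..min s n}) h)"
proof -
  define g where "g i = \<bar>(transpose D *v h) $ i\<bar> powr q" for i
  have disj: "disjoint_family_on (\<lambda>j. \<sigma> ` index_block s a n j) {..<n}"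
    using sorted_blocks_disjoint(1)[OF inj] by (rule disjoint_family_on_mono[OF subset_UNIV])
  have "(\<Sum>j<n. qnorm_q q (restr_analysis D (\<sigma> ` index_block s a n j) h))
      = (\<Sum>i\<in>(\<Union>j<n. \<sigma> ` index_block s a n j). g i)"
    unfolding qnorm_q_restr_analysis g_def
    by (rule sum.UNION_disjoint_family[symmetric, OF finite_lessThan _ disj]) simp
  also have "\<dots> \<le> (\<Sum>i\<in>UNIV - \<sigma> ` {1..min s n}. g i)"
  proof (rule sum_mono2)
    show "(\<Union>j<n. \<sigma> ` index_block s a n j) \<subseteq> UNIV - \<sigma> ` {1..min s n}"
      using sorted_blocks_disjoint(2)[OF inj, of s a] by blast
  qed (simp_all add: g_def)
  finally have blocks: "(\<Sum>j<n. qnorm_q q (restr_analysis D (\<sigma> ` index_block s a n j) h))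
      \<le> qnorm_q q (restr_analysis D (UNIV - \<sigma> ` {1..min s n}) h)"
    unfolding qnorm_q_restr_analysis g_def .
  have "(\<Sum>j<n. norm (restr_analysis D (\<sigma> ` index_block s a n (Suc j)) h) powr q)
      \<le> (\<Sum>j<n. real a powr (q / 2 - 1) * qnorm_q q (restr_analysis D (\<sigma> ` index_block s a n j) h))"
    by (rule sum_mono) (rule sorted_block_norm_powr_le[OF q \<open>0 < a\<close> inj sorted])
  also have "\<dots> \<le> real a powr (q / 2 - 1) * qnorm_q q (restr_analysis D (UNIV - \<sigma> ` {1..min s n}) h)"
    unfolding sum_distrib_left[symmetric] using blocks by (rule mult_left_mono) simp
  finally show ?thesis .
qed

theorem lemma2p7:
  fixes q L U :: real
    and D :: "real ^ 'd ^ 'n"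
    and A :: "real ^ 'n ^ 'm"
    and s a :: nat
    and h :: "real ^ 'n"
    and \<sigma> :: "nat \<Rightarrow> 'd"
  assumes q: "0 < q" "q \<le> 1"
    and LU: "0 < L" "L \<le> U"
    and frame: "is_frame D L U"
    and sa: "0 < s" "s < a"
    and rip: "\<exists>\<delta>. dq_rip A D q (s + a) \<delta>"
    and sort_bij: "bij_betw \<sigma> {1..CARD('d)} UNIV"
    and sort_mono: "\<forall>i j. 1 \<le> i \<and> i \<le> j \<and> j \<le> CARD('d) \<longrightarrow>
                      \<bar>(transpose D *v h) $ \<sigma> j\<bar> \<le> \<bar>(transpose D *v h) $ \<sigma> i\<bar>"
  shows
    "let \<kappa> = U / L;
         \<delta>a = rip_const A D q a;
         \<delta>sa = rip_const A D q (s + a);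
         \<Delta> = (1 + \<delta>a) / (1 - \<delta>sa);
         T = \<sigma> ` {1..min s CARD('d)};
         T1 = \<sigma> ` {s + 1..min (s + a) CARD('d)};
         T01 = T \<union> T1
     in norm (restr_analysis D T01 h) powr q
        \<le> 2 powr (- q / 2) * (1 + sqrt (1 + 4 * \<kappa> powr (-2) * \<Delta> powr (-2 / q))) powr (q / 2)
          * \<kappa> powr q * \<Delta> * real a powr (q / 2 - 1)
          * (qnorm_q q (restr_analysis D (UNIV - T) h)
             + L powr (q / 2) * real a powr (1 - q / 2) * qnorm_q q (A *v h) / (1 + \<delta>a))"
proof -
  define \<delta>a where "\<delta>a = rip_const A D q a"
  define \<delta>sa where "\<delta>sa = rip_const A D q (s + a)"
  define T where "T = \<sigma> ` {1..min s CARD('d)}"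
  define T01 where "T01 = T \<union> \<sigma> ` index_block s a CARD('d) 0"
  have "0 < a" using sa by simp
  have ripsa: "dq_rip A D q (s + a) \<delta>sa" unfolding \<delta>sa_def using rip by (rule rip_const_attained)
  have ripa: "dq_rip A D q a \<delta>a" unfolding \<delta>a_def using rip dq_rip_mono[of A D q "s + a" _ a]
    by (intro rip_const_attained) auto
  note partition = sorted_blocks_partition[OF \<open>0 < a\<close> sort_bij, of s, folded T_def, folded T01_def]
  note tail = sorted_tail_blocks_le[OF q(1) \<open>0 < a\<close> bij_betw_imp_inj_on[OF sort_bij] sort_mono, of s,
      folded T_def]
  have "real a powr (q / 2 - 1) * real a powr (1 - q / 2) = 1"
    using \<open>0 < a\<close> by (simp flip: powr_add)
  then have factor: "real a powr (q / 2 - 1) * qnorm_q q (restr_analysis D (UNIV - T) h)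
      + L powr (q / 2) * qnorm_q q (A *v h) / (1 + \<delta>a)
    = real a powr (q / 2 - 1) * (qnorm_q q (restr_analysis D (UNIV - T) h)
      + L powr (q / 2) * real a powr (1 - q / 2) * qnorm_q q (A *v h) / (1 + \<delta>a))"
    by (simp add: algebra_simps)
  have T1: "\<sigma> ` index_block s a CARD('d) 0 = \<sigma> ` {s + 1..min (s + a) CARD('d)}"
    by (simp add: index_block_def)
  from frame_rip_partition_bound[OF q LU frame ripsa ripa finite_lessThan partition tail, unfolded factor]
  show ?thesis
    unfolding T01_def T_def T1 \<delta>a_def \<delta>sa_def Let_def by (simp only: mult.assoc)
qed

end
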